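(* Let $m$ be a positive integer and $k\ge0$. If $\|m\alpha\|\le\|q_k\alpha\|$, then $\mathrm{ab}_\alpha(m)\ge q_{k+1}$. If $\|m\alpha\|\ge\|q_k\alpha\|$, then $\mathrm{ab}_\alpha(m)<q_{k+1}+q_k$.
   Context: $\alpha\in(0,1)$ irrational, $\alpha=[0;a_1,a_2,\ldots]$ with positive integers $a_i$, $a_1\ge2$; $q_{-1}=0$, $q_0=1$, $q_1=a_1$, $q_k=a_kq_{k-1}+q_{k-2}$ ($k\ge2$). $\|x\|$ is the distance from $x$ to the nearest integer. Sturmian words of slope $\alpha$: with $R(\rho)=\{\rho+\alpha\}$ on $[0,1)$ and either $I_0=[0,1-\alpha)$ or $I_0=(0,1-\alpha]$ ($I_1$ its complement), $\mathbf{s}_{\rho,\alpha}$ has $n$-th letter $0$ iff $R^n(\rho)\in I_0$; they share a set $\mathcal{L}_\alpha$ of finite factors. An abelian power of period $m$ and exponent $e$ is a concatenation of $e$ pairwise abelian equivalent words (same numbers of $0$s and $1$s) of length $m$; $\mathrm{ab}_\alpha(m)$ is the maximum exponent of an abelian power of period $m$ in $\mathcal{L}_\alpha$ (it is known that $\mathrm{ab}_\alpha(m)=\lfloor 1/\|m\alpha\|\rfloor$). *)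

theory Defs
  imports Complex_Main
begin

definition dist_int :: "real \<Rightarrow> real" where
  "dist_int x = \<bar>x - of_int (round x)\<bar>"

text \<open>Continued fraction expansion alpha = [0; a_1, a_2, ...] via the Gauss map:
  cf_rest alpha n is the n-th complete remainder (alpha_0 = alpha,
  alpha_{n+1} = frac (1/alpha_n)), and a_{n+1} = floor (1/alpha_n).\<close>
fun cf_rest :: "real \<Rightarrow> nat \<Rightarrow> real" where
  "cf_rest \<alpha> 0 = \<alpha>"
| "cf_rest \<alpha> (Suc n) = frac (1 / cf_rest \<alpha> n)"

definition cf_a :: "real \<Rightarrow> nat \<Rightarrow> nat" where
  "cf_a \<alpha> n = nat \<lfloor>1 / cf_rest \<alpha> (n - 1)\<rfloor>"   (* meaningful for n \<ge> 1 *)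

text \<open>Denominators of convergents: q_0 = 1, q_1 = a_1, q_k = a_k q_{k-1} + q_{k-2}
  (consistent with q_{-1} = 0).\<close>
fun cf_q :: "real \<Rightarrow> nat \<Rightarrow> nat" where
  "cf_q \<alpha> 0 = 1"
| "cf_q \<alpha> (Suc 0) = cf_a \<alpha> 1"
| "cf_q \<alpha> (Suc (Suc k)) = cf_a \<alpha> (k + 2) * cf_q \<alpha> (Suc k) + cf_q \<alpha> k"

text \<open>Sturmian word of slope alpha and intercept rho; b selects the interval:
  b = False: I_0 = [0, 1 - alpha);  b = True: I_0 = (0, 1 - alpha].\<close>
definition in_I0 :: "bool \<Rightarrow> real \<Rightarrow> real \<Rightarrow> bool" where
  "in_I0 b \<alpha> x = (if b then 0 < x \<and> x \<le> 1 - \<alpha> else 0 \<le> x \<and> x < 1 - \<alpha>)"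

definition sturmian :: "bool \<Rightarrow> real \<Rightarrow> real \<Rightarrow> nat \<Rightarrow> nat" where
  "sturmian b \<rho> \<alpha> n = (if in_I0 b \<alpha> (frac (\<rho> + real n * \<alpha>)) then 0 else 1)"

definition sturm_lang :: "real \<Rightarrow> nat list set" where
  "sturm_lang \<alpha> = {w. \<exists>b \<rho> i. 0 \<le> \<rho> \<and> \<rho> < 1 \<and>
      w = map (\<lambda>j. sturmian b \<rho> \<alpha> (i + j)) [0..<length w]}"

definition abelian_power :: "nat list \<Rightarrow> nat \<Rightarrow> nat \<Rightarrow> bool" where
  "abelian_power w m e \<longleftrightarrow> length w = e * m \<and>
     (\<forall>i<e. \<forall>j<e. (\<forall>c::nat. count_list (take m (drop (i * m) w)) c = count_list (take m (drop (j * m) w)) c))"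

definition ab :: "real \<Rightarrow> nat \<Rightarrow> nat" where
  "ab \<alpha> m = (GREATEST e. \<exists>w \<in> sturm_lang \<alpha>. abelian_power w m e)"

end

theory Submission
  imports Defs
begin

text \<open>
  The n-th letter of a Sturmian word is the jump of \<open>n \<mapsto> \<lfloor>\<rho> + n\<alpha>\<rfloor>\<close> (of
  \<open>n \<mapsto> \<lceil>\<rho> + n\<alpha>\<rceil>\<close> for the other choice of \<open>I\<^sub>0\<close>), so a factor of length m starting
  at i contains \<open>\<lfloor>\<rho> + (i+m)\<alpha>\<rfloor> - \<lfloor>\<rho> + i\<alpha>\<rfloor>\<close> ones. An abelian power of period m
  and exponent e with c ones per block therefore needs the e+1 points \<open>\<rho> + (i + tm)\<alpha> - tc\<close>
  to lie in one unit interval, whence \<open>e \<bar>m\<alpha> - c\<bar> < 1\<close>; conversely a suitable \<open>\<rho>\<close> realises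
  this for c the nearest integer to \<open>m\<alpha>\<close>. Hence \<open>n \<le> ab\<^sub>\<alpha>(m)\<close> iff \<open>n \<parallel>m\<alpha>\<parallel> < 1\<close>.

  With the complete remainders \<open>\<alpha>\<^sub>i\<close> one has \<open>q\<^sub>k\<alpha> - p\<^sub>k = (-1)\<^sup>k \<alpha>\<^sub>0\<cdots>\<alpha>\<^sub>k\<close>, and
  \<open>a\<^sub>1 \<ge> 2\<close> makes this the distance to the nearest integer. The identity
  \<open>q\<^sub>k\<^sub>+\<^sub>1 \<alpha>\<^sub>0\<cdots>\<alpha>\<^sub>k + q\<^sub>k \<alpha>\<^sub>0\<cdots>\<alpha>\<^sub>k\<^sub>+\<^sub>1 = 1\<close> then yields
  \<open>1/(q\<^sub>k\<^sub>+\<^sub>1 + q\<^sub>k) < \<parallel>q\<^sub>k\<alpha>\<parallel> < 1/q\<^sub>k\<^sub>+\<^sub>1\<close>, and both claims follow.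
\<close>

definition mech_round :: "bool \<Rightarrow> real \<Rightarrow> int" where
  "mech_round b x = (if b then \<lceil>x\<rceil> else \<lfloor>x\<rfloor>)"

lemma mech_round_add_of_int: "mech_round b (x + of_int n) = mech_round b x + n"
  by (simp add: mech_round_def flip: floor_add_int)

lemma mech_round_diff_lt_1:
  fixes x y :: real
  shows "\<bar>(mech_round b x - x) - (mech_round b y - y)\<bar> < 1"
  unfolding mech_round_def by (cases b) (simp_all add: abs_less_iff; linarith)+

lemma mech_round_add_step:
  assumes "0 < \<alpha>" "\<alpha> < 1"
  shows "mech_round b (x + \<alpha>) - mech_round b x = (if in_I0 b \<alpha> (frac x) then 0 else 1)"
proof -
  define f where "f = frac x"
  have x: "x = f + of_int \<lfloor>x\<rfloor>" and f: "0 \<le> f" "f < 1"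
    by (simp_all add: f_def frac_def) (metis frac_def frac_lt_1)
  have "x + \<alpha> = (f + \<alpha>) + of_int \<lfloor>x\<rfloor>"
    using x by simp
  then have "mech_round b (x + \<alpha>) - mech_round b x = mech_round b (f + \<alpha>) - mech_round b f"
    by (metis x mech_round_add_of_int diff_add_cancel add_diff_cancel_right)
  also have "\<dots> = (if in_I0 b \<alpha> f then 0 else 1)"
  proof -
    have "\<lfloor>f\<rfloor> = 0" "\<lceil>f\<rceil> = (if f = 0 then 0 else 1)"
      "\<lfloor>f + \<alpha>\<rfloor> = (if f + \<alpha> < 1 then 0 else 1)"
      "\<lceil>f + \<alpha>\<rceil> = (if f + \<alpha> \<le> 1 then 1 else 2)"
      using f assms by (simp_all add: floor_eq_iff ceiling_eq_iff)
    then show ?thesis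
      using f assms unfolding mech_round_def in_I0_def by auto
  qed
  finally show ?thesis unfolding f_def .
qed

lemma sturmian_eq_mech_round_diff:
  assumes "0 < \<alpha>" "\<alpha> < 1"
  shows "int (sturmian b \<rho> \<alpha> n)
    = mech_round b (\<rho> + real (Suc n) * \<alpha>) - mech_round b (\<rho> + real n * \<alpha>)"
  using mech_round_add_step[OF assms, of b "\<rho> + real n * \<alpha>"]
  by (simp add: sturmian_def algebra_simps)

lemma sum_list_sturmian_upt:
  assumes "0 < \<alpha>" "\<alpha> < 1" "i \<le> j"
  shows "int (sum_list (map (sturmian b \<rho> \<alpha>) [i..<j]))
    = mech_round b (\<rho> + real j * \<alpha>) - mech_round b (\<rho> + real i * \<alpha>)"
proof -
  have "int (sum_list (map (sturmian b \<rho> \<alpha>) [i..<j])) = (\<Sum>n = i..<j. int (sturmian b \<rho> \<alpha> n))"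
    by (simp add: sum_list_distinct_conv_sum_set)
  also have "\<dots> = mech_round b (\<rho> + real j * \<alpha>) - mech_round b (\<rho> + real i * \<alpha>)"
    using sum_Suc_diff'[OF assms(3), of "\<lambda>n. mech_round b (\<rho> + real n * \<alpha>)"]
    by (simp add: sturmian_eq_mech_round_diff[OF assms(1,2)])
  finally show ?thesis .
qed

lemma mem_sturm_lang_iff:
  "w \<in> sturm_lang \<alpha> \<longleftrightarrow>
     (\<exists>b \<rho> i. 0 \<le> \<rho> \<and> \<rho> < 1 \<and> w = map (sturmian b \<rho> \<alpha>) [i..<i + length w])"
proof -
  have "map (\<lambda>j. sturmian b \<rho> \<alpha> (i + j)) [0..<n] = map (sturmian b \<rho> \<alpha>) [i..<i + n]"
    for b \<rho> i n
    by (induction n) auto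
  then show ?thesis
    unfolding sturm_lang_def by simp
qed

lemma count_list_binary:
  assumes "\<forall>x \<in> set xs. x \<le> (1::nat)"
  shows "count_list xs c = (if c = 0 then length xs - sum_list xs else if c = 1 then sum_list xs else 0)"
  using assms
proof (induction xs)
  case (Cons x xs)
  have "sum_list xs \<le> length xs"
    using Cons.prems by (induction xs) auto
  moreover have "x = 0 \<or> x = 1"
    using Cons.prems by auto
  ultimately show ?case using Cons by auto
qed simp

lemma abelian_power_binary_iff:
  assumes "\<forall>x \<in> set w. x \<le> (1::nat)"
  shows "abelian_power w m e \<longleftrightarrow> length w = e * m \<and>
    (\<forall>t < e. sum_list (take m (drop (t * m) w)) = sum_list (take m w))"
    (is "_ \<longleftrightarrow> _ \<and> (\<forall>t < e. sum_list (?B t) = _)")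
proof -
  have count: "count_list (?B t) c =
      (if c = 0 then length (?B t) - sum_list (?B t) else if c = 1 then sum_list (?B t) else 0)" for t c
    by (rule count_list_binary) (use assms in \<open>meson in_set_dropD in_set_takeD\<close>)
  have length_block: "length (?B t) = m" if "length w = e * m" "t < e" for t
  proof -
    have "t * m + m \<le> e * m"
      using mult_le_mono1[of "Suc t" e m] that by simp
    then show ?thesis using that by simp
  qed
  show ?thesis
  proof
    assume ab: "abelian_power w m e"
    have "sum_list (?B t) = sum_list (?B 0)" if "t < e" for t
    proof -
      have "count_list (?B t) 1 = count_list (?B 0) 1"
        using ab that unfolding abelian_power_def by (metis gr_zeroI not_less_zero)
      then show ?thesis
        unfolding count by simp
    qed
    then show "length w = e * m \<and> (\<forall>t < e. sum_list (?B t) = sum_list (take m w))"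
      using ab unfolding abelian_power_def by simp
  next
    assume len: "length w = e * m \<and> (\<forall>t < e. sum_list (?B t) = sum_list (take m w))"
    show "abelian_power w m e"
      unfolding abelian_power_def
    proof (intro conjI allI impI)
      fix i j c
      assume "i < e" "j < e"
      then show "count_list (?B i) c = count_list (?B j) c"
        unfolding count[of i c] count[of j c] using len length_block by simp
    qed (use len in auto)
  qed
qed

lemma abelian_power_sturmian_iff:
  fixes b \<rho> \<alpha> i m
  assumes "0 < \<alpha>" "\<alpha> < 1"
  defines "H \<equiv> \<lambda>t. mech_round b (\<rho> + real (i + t * m) * \<alpha>)"
  shows "abelian_power (map (sturmian b \<rho> \<alpha>) [i..<i + e * m]) m e \<longleftrightarrow>
    (\<forall>t < e. H (Suc t) - H t = H 1 - H 0)"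
proof -
  define w where "w = map (sturmian b \<rho> \<alpha>) [i..<i + e * m]"
  have block: "int (sum_list (take m (drop (t * m) w))) = H (Suc t) - H t" if "t < e" for t
  proof -
    have "i + t * m + m \<le> i + e * m"
      using mult_le_mono1[of "Suc t" e m] that by simp
    then have "take m (drop (t * m) w) = map (sturmian b \<rho> \<alpha>) [i + t * m..<i + t * m + m]"
      unfolding w_def by (simp add: drop_map take_map)
    moreover have "i + Suc t * m = i + t * m + m"
      by simp
    ultimately show ?thesis
      unfolding H_def using sum_list_sturmian_upt[OF assms(1,2), of "i + t * m" "i + t * m + m"]
      by (simp add: algebra_simps)
  qed
  have "abelian_power w m e \<longleftrightarrow>
      (\<forall>t < e. sum_list (take m (drop (t * m) w)) = sum_list (take m (drop (0 * m) w)))"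
    by (subst abelian_power_binary_iff) (auto simp: w_def sturmian_def)
  also have "\<dots> \<longleftrightarrow> (\<forall>t < e. H (Suc t) - H t = H 1 - H 0)"
  proof -
    have "sum_list (take m (drop (t * m) w)) = sum_list (take m (drop (0 * m) w))
        \<longleftrightarrow> H (Suc t) - H t = H 1 - H 0" if "t < e" for t
    proof -
      have "sum_list (take m (drop (t * m) w)) = sum_list (take m (drop (0 * m) w))
          \<longleftrightarrow> int (sum_list (take m (drop (t * m) w))) = int (sum_list (take m (drop (0 * m) w)))"
        by (rule of_nat_eq_iff[symmetric])
      also have "\<dots> \<longleftrightarrow> H (Suc t) - H t = H 1 - H 0"
        using block[OF that] block[of 0] that by simp
      finally show ?thesis .
    qed
    then show ?thesis by blast
  qed
  finally show ?thesis unfolding w_def .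
qed

lemma sturm_lang_abelian_power_bound:
  assumes "0 < \<alpha>" "\<alpha> < 1" "w \<in> sturm_lang \<alpha>" "abelian_power w m e"
  shows "real e * dist_int (real m * \<alpha>) < 1"
proof -
  obtain b \<rho> i where "w = map (sturmian b \<rho> \<alpha>) [i..<i + length w]"
    using assms(3) unfolding mem_sturm_lang_iff by blast
  moreover have "length w = e * m"
    using assms(4) unfolding abelian_power_def by simp
  ultimately have w: "w = map (sturmian b \<rho> \<alpha>) [i..<i + e * m]"
    by (simp only:)
  define x where "x = (\<lambda>t. \<rho> + real (i + t * m) * \<alpha>)"
  define H where "H = (\<lambda>t. mech_round b (x t))"
  define c where "c = H 1 - H 0"
  have "\<forall>t < e. H (Suc t) - H t = c"
    using assms(4) abelian_power_sturmian_iff[OF assms(1,2)] unfolding w H_def x_def c_def by simp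
  then have "H e - H 0 = int e * c"
    using sum_lessThan_telescope[of H e] by simp
  moreover have "x e - x 0 = real e * (real m * \<alpha>)"
    by (simp add: x_def algebra_simps)
  ultimately have "(H e - x e) - (H 0 - x 0) = real e * (of_int c - real m * \<alpha>)"
    by (simp add: algebra_simps flip: of_int_diff)
  then have "real e * \<bar>real m * \<alpha> - of_int c\<bar> = \<bar>(H e - x e) - (H 0 - x 0)\<bar>"
    by (simp add: abs_mult abs_minus_commute)
  also have "\<dots> < 1"
    unfolding H_def by (rule mech_round_diff_lt_1)
  finally have "real e * \<bar>real m * \<alpha> - of_int c\<bar> < 1" .
  moreover have "dist_int (real m * \<alpha>) \<le> \<bar>real m * \<alpha> - of_int c\<bar>"
    unfolding dist_int_def by (rule round_diff_minimal)
  ultimately show ?thesis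
    by (smt (verit) mult_left_mono of_nat_0_le_iff)
qed

lemma progression_in_unit_interval:
  fixes \<delta> :: real
  assumes "real e * \<bar>\<delta>\<bar> < 1"
  obtains \<rho> where "\<forall>t \<le> e. 0 \<le> \<rho> + real t * \<delta> \<and> \<rho> + real t * \<delta> < 1"
proof (cases "\<delta> \<ge> 0")
  case True
  have "0 \<le> real t * \<delta> \<and> real t * \<delta> < 1" if "t \<le> e" for t
    using True assms mult_right_mono[of "real t" "real e" \<delta>] that by simp
  then show ?thesis
    by (intro that[of 0]) simp
next
  case False
  have "0 \<le> (real e - real t) * - \<delta> \<and> (real e - real t) * - \<delta> < 1" if "t \<le> e" for t
  proof -
    have "(real e - real t) * - \<delta> \<le> real e * - \<delta>"
      using False by (simp add: mult_right_mono)
    moreover have "0 \<le> (real e - real t) * - \<delta>"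
      using False that by (intro mult_nonneg_nonneg) simp_all
    moreover have "real e * - \<delta> < 1"
      using False assms by simp
    ultimately show ?thesis
      by linarith
  qed
  then show ?thesis
    by (intro that[of "real e * - \<delta>"]) (simp add: algebra_simps)
qed

lemma sturm_lang_abelian_power_exists:
  assumes "0 < \<alpha>" "\<alpha> < 1" "real e * dist_int (real m * \<alpha>) < 1"
  shows "\<exists>w \<in> sturm_lang \<alpha>. abelian_power w m e"
proof -
  define c where "c = round (real m * \<alpha>)"
  define \<delta> where "\<delta> = real m * \<alpha> - of_int c"
  have "real e * \<bar>\<delta>\<bar> < 1"
    using assms(3) by (simp add: dist_int_def \<delta>_def c_def)
  then obtain \<rho> where orbit: "0 \<le> \<rho> + real t * \<delta> \<and> \<rho> + real t * \<delta> < 1" if "t \<le> e" for t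
    using progression_in_unit_interval by blast
  define H where "H = (\<lambda>t. mech_round False (\<rho> + real (0 + t * m) * \<alpha>))"
  have height: "H t = int t * c" if "t \<le> e" for t
  proof -
    have "\<rho> + real (0 + t * m) * \<alpha> = (\<rho> + real t * \<delta>) + of_int (int t * c)"
      by (simp add: \<delta>_def algebra_simps)
    then show ?thesis
      using orbit[OF that] by (simp add: H_def mech_round_def floor_eq_iff)
  qed
  define w where "w = map (sturmian False \<rho> \<alpha>) [0..<0 + e * m]"
  have "w \<in> sturm_lang \<alpha>"
    unfolding mem_sturm_lang_iff w_def using orbit[of 0]
    by (intro exI[of _ False] exI[of _ \<rho>] exI[of _ 0]) simp
  moreover have "\<forall>t < e. H (Suc t) - H t = H 1 - H 0"
    by (simp add: height algebra_simps)
  then have "abelian_power w m e"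
    unfolding w_def abelian_power_sturmian_iff[OF assms(1,2)] H_def .
  ultimately show ?thesis by blast
qed

lemma le_ab_iff:
  assumes "0 < \<alpha>" "\<alpha> < 1" "0 < dist_int (real m * \<alpha>)"
  shows "n \<le> ab \<alpha> m \<longleftrightarrow> real n * dist_int (real m * \<alpha>) < 1"
proof -
  define d where "d = dist_int (real m * \<alpha>)"
  define P where "P = (\<lambda>e. real e * d < 1)"
  have ab: "ab \<alpha> m = Greatest P"
    unfolding ab_def P_def d_def
    using sturm_lang_abelian_power_bound[OF assms(1,2)] sturm_lang_abelian_power_exists[OF assms(1,2)]
    by metis
  have bounded: "e \<le> nat \<lceil>1 / d\<rceil>" if "P e" for e
  proof -
    have "real e < 1 / d"
      using that assms(3) by (simp add: P_def d_def field_simps)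
    then show ?thesis by linarith
  qed
  have "P (Greatest P)"
    by (rule GreatestI_nat[of P 0, OF _ bounded]) (simp add: P_def)
  then have "n \<le> Greatest P \<Longrightarrow> P n"
    unfolding P_def using assms(3) d_def by (smt (verit) mult_right_mono of_nat_le_iff)
  then show ?thesis
    using Greatest_le_nat[of P n, OF _ bounded] unfolding ab P_def d_def by blast
qed

lemma dist_int_pos_iff: "0 < dist_int x \<longleftrightarrow> x \<notin> \<int>"
proof -
  have "x \<in> \<int> \<longleftrightarrow> x = of_int (round x)"
    by (metis Ints_cases Ints_of_int round_of_int)
  then show ?thesis
    unfolding dist_int_def by auto
qed

lemma dist_int_irrational_mult_pos:
  assumes "\<alpha> \<notin> \<rat>" "0 < m"
  shows "0 < dist_int (real m * \<alpha>)"
  unfolding dist_int_pos_iff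
proof
  assume "real m * \<alpha> \<in> \<int>"
  then have "real m * \<alpha> / real m \<in> \<rat>"
    using Ints_subset_Rats by (intro Rats_divide) auto
  then show False
    using assms by simp
qed

lemma cf_rest_not_Rats: "\<alpha> \<notin> \<rat> \<Longrightarrow> cf_rest \<alpha> n \<notin> \<rat>"
proof (induction n)
  case (Suc n)
  then have "1 / cf_rest \<alpha> n \<notin> \<rat>"
    by (metis Rats_inverse inverse_eq_divide inverse_inverse_eq)
  then show ?case
    by (metis Rats_add Rats_of_int cf_rest.simps(2) frac_def diff_add_cancel)
qed simp

lemma cf_rest_pos: "0 < \<alpha> \<Longrightarrow> \<alpha> \<notin> \<rat> \<Longrightarrow> 0 < cf_rest \<alpha> n"
proof (cases n)
  case (Suc k)
  assume "\<alpha> \<notin> \<rat>"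
  then have "cf_rest \<alpha> n \<noteq> 0"
    using cf_rest_not_Rats by (metis Rats_0)
  then show ?thesis
    using frac_ge_0 by (simp add: Suc order_less_le)
qed simp

lemma cf_rest_lt_1: "\<alpha> < 1 \<Longrightarrow> cf_rest \<alpha> n < 1"
  by (cases n) (simp_all add: frac_lt_1)

lemma cf_a_add_cf_rest:
  assumes "0 \<le> \<alpha>"
  shows "real (cf_a \<alpha> (Suc k)) + cf_rest \<alpha> (Suc k) = 1 / cf_rest \<alpha> k"
proof -
  have "0 \<le> cf_rest \<alpha> k"
    using assms by (cases k) simp_all
  then show ?thesis
    by (simp add: cf_a_def frac_def)
qed

fun cf_p :: "real \<Rightarrow> nat \<Rightarrow> int" where
  "cf_p \<alpha> 0 = 0"
| "cf_p \<alpha> (Suc 0) = 1"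
| "cf_p \<alpha> (Suc (Suc k)) = int (cf_a \<alpha> (k + 2)) * cf_p \<alpha> (Suc k) + cf_p \<alpha> k"

lemma cf_q_pos: "1 \<le> cf_a \<alpha> 1 \<Longrightarrow> 0 < cf_q \<alpha> k"
  by (induction \<alpha> k rule: cf_q.induct) auto

lemma cf_rest_prod_Suc:
  assumes "0 < \<alpha>" "\<alpha> \<notin> \<rat>"
  shows "(\<Prod>i\<le>Suc k. cf_rest \<alpha> i) * (real (cf_a \<alpha> (k + 2)) + cf_rest \<alpha> (k + 2))
    = (\<Prod>i\<le>k. cf_rest \<alpha> i)"
  using cf_a_add_cf_rest[of \<alpha> "Suc k"] cf_rest_pos[OF assms, of "Suc k"] assms(1)
  by (simp del: cf_rest.simps)

lemma cf_q_mult_diff_cf_p: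
  assumes "0 < \<alpha>" "\<alpha> \<notin> \<rat>"
  shows "real (cf_q \<alpha> k) * \<alpha> - of_int (cf_p \<alpha> k) = (-1) ^ k * (\<Prod>i\<le>k. cf_rest \<alpha> i)"
proof (induction k rule: induct_nat_012)
  case 1
  then show ?case
    using cf_a_add_cf_rest[of \<alpha> 0] assms(1) by (simp add: field_simps)
next
  case (ge2 n)
  define a where "a = real (cf_a \<alpha> (n + 2))"
  define P where "P = (\<lambda>k. \<Prod>i\<le>k. cf_rest \<alpha> i)"
  have "real (cf_q \<alpha> (Suc (Suc n))) * \<alpha> - of_int (cf_p \<alpha> (Suc (Suc n)))
      = a * (real (cf_q \<alpha> (Suc n)) * \<alpha> - of_int (cf_p \<alpha> (Suc n)))
        + (real (cf_q \<alpha> n) * \<alpha> - of_int (cf_p \<alpha> n))"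
    by (simp add: a_def algebra_simps)
  also have "\<dots> = a * ((-1) ^ Suc n * P (Suc n)) + (-1) ^ n * P n"
    unfolding P_def using ge2 by (simp only:)
  also have "\<dots> = (-1) ^ n * (P n - a * P (Suc n))"
    by (simp add: algebra_simps)
  also have "\<dots> = (-1) ^ n * (P (Suc n) * cf_rest \<alpha> (n + 2))"
  proof -
    have "P (Suc n) * (a + cf_rest \<alpha> (n + 2)) = P n"
      unfolding P_def a_def by (rule cf_rest_prod_Suc[OF assms])
    then have "P n - a * P (Suc n) = P (Suc n) * cf_rest \<alpha> (n + 2)"
      by (simp add: algebra_simps del: cf_rest.simps)
    then show ?thesis
      by (simp only:)
  qed
  also have "\<dots> = (-1) ^ Suc (Suc n) * P (Suc (Suc n))"
    by (simp add: P_def del: cf_rest.simps)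
  finally show ?case
    unfolding P_def .
qed simp

lemma cf_q_prod_rest_identity:
  assumes "0 < \<alpha>" "\<alpha> \<notin> \<rat>"
  shows "real (cf_q \<alpha> (Suc k)) * (\<Prod>i\<le>k. cf_rest \<alpha> i)
       + real (cf_q \<alpha> k) * (\<Prod>i\<le>Suc k. cf_rest \<alpha> i) = 1"
proof (induction k)
  case 0
  then show ?case
    using cf_a_add_cf_rest[of \<alpha> 0] assms(1) by (simp add: field_simps)
next
  case (Suc k)
  define P where "P = (\<lambda>k. \<Prod>i\<le>k. cf_rest \<alpha> i)"
  have "real (cf_q \<alpha> (Suc (Suc k))) * P (Suc k) + real (cf_q \<alpha> (Suc k)) * P (Suc (Suc k))
      = real (cf_q \<alpha> (Suc k)) * (P (Suc k) * (real (cf_a \<alpha> (k + 2)) + cf_rest \<alpha> (k + 2)))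
        + real (cf_q \<alpha> k) * P (Suc k)"
    by (simp add: P_def algebra_simps del: cf_rest.simps)
  also have "\<dots> = real (cf_q \<alpha> (Suc k)) * P k + real (cf_q \<alpha> k) * P (Suc k)"
    unfolding P_def cf_rest_prod_Suc[OF assms] ..
  also have "\<dots> = 1"
    unfolding P_def by (rule Suc.IH)
  finally show ?case
    unfolding P_def .
qed

lemma cf_rest_prod_le:
  assumes "0 < \<alpha>" "\<alpha> < 1" "\<alpha> \<notin> \<rat>"
  shows "(\<Prod>i\<le>k. cf_rest \<alpha> i) \<le> \<alpha>"
proof (induction k)
  case (Suc k)
  have "0 \<le> (\<Prod>i\<le>k. cf_rest \<alpha> i)"
    using cf_rest_pos[OF assms(1,3)] by (simp add: prod_nonneg less_imp_le)
  then have "(\<Prod>i\<le>k. cf_rest \<alpha> i) * cf_rest \<alpha> (Suc k) \<le> (\<Prod>i\<le>k. cf_rest \<alpha> i)"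
    using cf_rest_lt_1[OF assms(2), of "Suc k"] by (simp add: mult_left_le del: cf_rest.simps)
  then show ?case
    using Suc.IH by (simp del: cf_rest.simps)
qed simp

lemma dist_int_cf_q:
  assumes "0 < \<alpha>" "\<alpha> < 1/2" "\<alpha> \<notin> \<rat>"
  shows "dist_int (real (cf_q \<alpha> k) * \<alpha>) = (\<Prod>i\<le>k. cf_rest \<alpha> i)"
proof -
  define P where "P = (\<Prod>i\<le>k. cf_rest \<alpha> i)"
  have P: "0 < P" "P < 1/2"
    using cf_rest_pos[OF assms(1,3)] cf_rest_prod_le[OF assms(1) _ assms(3), of k] assms(2)
    by (simp_all add: P_def prod_pos)
  have diff: "\<bar>real (cf_q \<alpha> k) * \<alpha> - of_int (cf_p \<alpha> k)\<bar> = P"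
    using cf_q_mult_diff_cf_p[OF assms(1,3), of k] P by (simp add: P_def abs_mult)
  then have "round (real (cf_q \<alpha> k) * \<alpha>) = cf_p \<alpha> k"
    using P by (intro round_unique') simp
  then show ?thesis
    using diff by (simp add: dist_int_def P_def)
qed

lemma cf_q_prod_rest_bounds:
  assumes "0 < \<alpha>" "\<alpha> < 1" "\<alpha> \<notin> \<rat>" "1 \<le> cf_a \<alpha> 1"
  shows "real (cf_q \<alpha> (Suc k)) * (\<Prod>i\<le>k. cf_rest \<alpha> i) < 1"
    and "1 < real (cf_q \<alpha> (Suc k) + cf_q \<alpha> k) * (\<Prod>i\<le>k. cf_rest \<alpha> i)"
proof -
  define P where "P = (\<Prod>i\<le>k. cf_rest \<alpha> i)"
  define R where "R = P * cf_rest \<alpha> (Suc k)"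
  have "0 < P"
    using cf_rest_pos[OF assms(1,3)] by (simp add: P_def prod_pos)
  then have "0 < R" "R < P"
    using cf_rest_pos[OF assms(1,3), of "Suc k"] cf_rest_lt_1[OF assms(2), of "Suc k"]
    by (simp_all add: R_def del: cf_rest.simps)
  moreover have "0 < real (cf_q \<alpha> k)"
    using cf_q_pos[OF assms(4)] by simp
  ultimately have "0 < real (cf_q \<alpha> k) * R" "real (cf_q \<alpha> k) * R < real (cf_q \<alpha> k) * P"
    by simp_all
  moreover have "real (cf_q \<alpha> (Suc k)) * P + real (cf_q \<alpha> k) * R = 1"
    using cf_q_prod_rest_identity[OF assms(1,3), of k] by (simp add: P_def R_def del: cf_rest.simps)
  ultimately show "real (cf_q \<alpha> (Suc k)) * P < 1" "1 < real (cf_q \<alpha> (Suc k) + cf_q \<alpha> k) * P"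
    by (simp_all add: distrib_right)
qed

lemma cf_a_1_ge_2_imp_less_half:
  assumes "0 < \<alpha>" "\<alpha> \<notin> \<rat>" "2 \<le> cf_a \<alpha> 1"
  shows "\<alpha> < 1/2"
proof -
  have "2 < 1 / \<alpha>"
    using cf_a_add_cf_rest[of \<alpha> 0] cf_rest_pos[OF assms(1,2), of 1] assms(1,3)
    by (simp del: cf_rest.simps(2))
  then show ?thesis
    using assms(1) by (simp add: field_simps)
qed

theorem lemma3p4:
  fixes \<alpha> :: real and m k :: nat
  assumes "0 < \<alpha>" "\<alpha> < 1" "\<alpha> \<notin> \<rat>"
    and "cf_a \<alpha> 1 \<ge> 2"
    and "0 < m"
  shows "(dist_int (real m * \<alpha>) \<le> dist_int (real (cf_q \<alpha> k) * \<alpha>)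
            \<longrightarrow> ab \<alpha> m \<ge> cf_q \<alpha> (k + 1))
       \<and> (dist_int (real m * \<alpha>) \<ge> dist_int (real (cf_q \<alpha> k) * \<alpha>)
            \<longrightarrow> ab \<alpha> m < cf_q \<alpha> (k + 1) + cf_q \<alpha> k)"
proof -
  define d where "d = dist_int (real m * \<alpha>)"
  define P where "P = (\<Prod>i\<le>k. cf_rest \<alpha> i)"
  have ab: "n \<le> ab \<alpha> m \<longleftrightarrow> real n * d < 1" for n
    unfolding d_def using le_ab_iff[OF assms(1,2) dist_int_irrational_mult_pos[OF assms(3,5)]] .
  have dist_q: "dist_int (real (cf_q \<alpha> k) * \<alpha>) = P"
    unfolding P_def using dist_int_cf_q cf_a_1_ge_2_imp_less_half assms(1,3,4) by blast
  have upper: "real (cf_q \<alpha> (k + 1)) * P < 1"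
    and lower: "1 < real (cf_q \<alpha> (k + 1) + cf_q \<alpha> k) * P"
    unfolding P_def using cf_q_prod_rest_bounds[OF assms(1-3)] assms(4) by simp_all
  show ?thesis
  proof (intro conjI impI)
    assume "dist_int (real m * \<alpha>) \<le> dist_int (real (cf_q \<alpha> k) * \<alpha>)"
    then have "real (cf_q \<alpha> (k + 1)) * d \<le> real (cf_q \<alpha> (k + 1)) * P"
      unfolding d_def dist_q by (simp add: mult_left_mono)
    then show "cf_q \<alpha> (k + 1) \<le> ab \<alpha> m"
      using ab upper by simp
  next
    assume "dist_int (real (cf_q \<alpha> k) * \<alpha>) \<le> dist_int (real m * \<alpha>)"
    then have "real (cf_q \<alpha> (k + 1) + cf_q \<alpha> k) * P \<le> real (cf_q \<alpha> (k + 1) + cf_q \<alpha> k) * d"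
      unfolding d_def dist_q by (simp add: mult_left_mono)
    then show "ab \<alpha> m < cf_q \<alpha> (k + 1) + cf_q \<alpha> k"
      using ab[of "cf_q \<alpha> (k + 1) + cf_q \<alpha> k"] lower by linarith
  qed
qed

end
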